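(* Consider the randomized gossip model described in the context. If disagreement divergence is achieved almost surely (for some initial value), then $\prod_{k=0}^\infty (1+2S_k)=\infty$.
   Context: Network with node set $\mathcal V=\{1,\dots,n\}$, $n\ge 3$. Let $A=[a_{ij}]$ be an $n\times n$ stochastic matrix. At each time $k=0,1,2,\dots$, independently of the past and of node states, a node $i$ is drawn with probability $1/n$ and then the pair $(i,j)$ is selected with probability $a_{ij}$. Given that pair $(i,j)$ is selected at time $k$, independently of time, node states and pair selection, node $i$: with probability $\alpha$ (event $\mathscr A_{ij}(k)$) sets $x_i(k+1)=(1-T_k)x_i(k)+T_kx_j(k)$, $0<T_k\le1$; with probability $\beta$ (event $\mathscr N_{ij}(k)$) sets $x_i(k+1)=x_i(k)$; with probability $\gamma$ (event $\mathscr R_{ij}(k)$) sets $x_i(k+1)=(1+S_k)x_i(k)-S_kx_j(k)$, $S_k>0$; $\alpha+\beta+\gamma=1$. Node $j$ updates analogously according to events $\mathscr A_{ji}(k),\mathscr N_{ji}(k),\mathscr R_{ji}(k)$ (possibly dependent on node $i$'s event); other nodes keep their states. Start at time $k_0\ge0$ from $x(k_0)\in\mathbb R^n$. Let $\mathcal H(k)=\max_i x_i(k)-\min_i x_i(k)$. Disagreement divergence is achieved a.s. for an initial value if $\mathbf P(\limsup_{k\to\infty}\mathcal H(k)>M)=1$ for all $M\ge0$. *)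

theory Defs
  imports "HOL-Probability.Probability"
begin

text \<open>Events for an updating node: attraction, neglect, repulsion.\<close>
datatype act = Att | Neu | Rep

definition upd :: "act \<Rightarrow> real \<Rightarrow> real \<Rightarrow> real \<Rightarrow> real \<Rightarrow> real" where
  "upd e T S xi xj = (case e of
      Att \<Rightarrow> (1 - T) * xi + T * xj
    | Neu \<Rightarrow> xi
    | Rep \<Rightarrow> (1 + S) * xi - S * xj)"

definition gstep :: "real \<Rightarrow> real \<Rightarrow> (nat \<times> nat) \<times> (act \<times> act) \<Rightarrow> (nat \<Rightarrow> real) \<Rightarrow> (nat \<Rightarrow> real)" where
  "gstep T S oc x = (case oc of ((i, j), (ei, ej)) \<Rightarrow>
      x(i := upd ei T S (x i) (x j), j := upd ej T S (x j) (x i)))"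

text \<open>State at time k0 + m, started at time k0 from x0, driven by the random outcomes w.\<close>
primrec gossip :: "(nat \<Rightarrow> real) \<Rightarrow> (nat \<Rightarrow> real) \<Rightarrow> nat \<Rightarrow> (nat \<Rightarrow> real)
    \<Rightarrow> (nat \<Rightarrow> (nat \<times> nat) \<times> (act \<times> act)) \<Rightarrow> nat \<Rightarrow> (nat \<Rightarrow> real)" where
  "gossip T S k0 x0 w 0 = x0"
| "gossip T S k0 x0 w (Suc m) = gstep (T (k0 + m)) (S (k0 + m)) (w (k0 + m)) (gossip T S k0 x0 w m)"

definition spread :: "nat \<Rightarrow> (nat \<Rightarrow> real) \<Rightarrow> real" where
  "spread n x = (MAX i\<in>{..<n}. x i) - (MIN i\<in>{..<n}. x i)"

end

theory Submission
  imports Defs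
begin

text \<open>Every update moves a node by at most S times the current spread outside the range of the
  two interacting states, so a step multiplies the spread by at most 1 + 2 S, whatever the events.
  Along almost every trajectory only nodes in range are selected, hence the spread at time k0 + m
  is at most the initial spread times the product of the 1 + 2 S k. If the product stayed bounded,
  the spread would be bounded by a constant M on almost every trajectory, and divergence beyond M
  could not have probability one.\<close>

lemma upd_bounds:
  assumes "lo \<le> xi" "xi \<le> hi" "lo \<le> xj" "xj \<le> hi" "0 < T" "T \<le> 1" "0 < S"
  shows "lo - S * (hi - lo) \<le> upd e T S xi xj \<and> upd e T S xi xj \<le> hi + S * (hi - lo)"
proof -
  have margin: "0 \<le> S * (hi - lo)" using assms by auto
  show ?thesis
  proof (cases e)
    case Att
    have "(1 - T) * xi + T * xj \<le> (1 - T) * hi + T * hi"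
      using assms by (intro add_mono mult_left_mono) auto
    moreover have "(1 - T) * lo + T * lo \<le> (1 - T) * xi + T * xj"
      using assms by (intro add_mono mult_left_mono) auto
    ultimately show ?thesis using Att margin by (auto simp: upd_def algebra_simps)
  next
    case Neu
    then have "upd e T S xi xj = xi" by (simp add: upd_def)
    then show ?thesis using assms margin by linarith
  next
    case Rep
    have "S * (xi - xj) \<le> S * (hi - lo)" "S * (lo - hi) \<le> S * (xi - xj)"
      using assms by (intro mult_left_mono; auto)+
    then show ?thesis using Rep assms by (auto simp: upd_def algebra_simps)
  qed
qed

lemma spread_nonneg: "0 < n \<Longrightarrow> 0 \<le> spread n x"
  by (auto simp: spread_def intro: order.trans[OF Min_le Max_ge])

lemma spread_gstep_le:
  assumes "i < n" "j < n" "0 < T" "T \<le> 1" "0 < S"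
  shows "spread n (gstep T S ((i, j), (ei, ej)) x) \<le> (1 + 2 * S) * spread n x"
proof -
  define lo where "lo = (MIN l\<in>{..<n}. x l)"
  define hi where "hi = (MAX l\<in>{..<n}. x l)"
  let ?y = "gstep T S ((i, j), (ei, ej)) x"
  have ne: "{..<n} \<noteq> {}" using assms by auto
  have x_bounds: "lo \<le> x l \<and> x l \<le> hi" if "l < n" for l
    using that by (auto simp: lo_def hi_def)
  have "0 \<le> S * (hi - lo)" using x_bounds[OF assms(1)] assms by auto
  then have x_wide: "lo - S * (hi - lo) \<le> x l \<and> x l \<le> hi + S * (hi - lo)" if "l < n" for l
    using x_bounds[OF that] by linarith
  have y_bounds: "lo - S * (hi - lo) \<le> ?y l \<and> ?y l \<le> hi + S * (hi - lo)" if "l < n" for l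
    using that x_bounds x_wide upd_bounds[of lo "x i" hi "x j" T S] upd_bounds[of lo "x j" hi "x i" T S] assms
    by (auto simp: gstep_def)
  have "(MAX l\<in>{..<n}. ?y l) \<le> hi + S * (hi - lo)" "lo - S * (hi - lo) \<le> (MIN l\<in>{..<n}. ?y l)"
    using y_bounds ne by auto
  then have "spread n ?y \<le> (hi + S * (hi - lo)) - (lo - S * (hi - lo))"
    unfolding spread_def by linarith
  also have "\<dots> = (1 + 2 * S) * spread n x"
    by (simp add: spread_def lo_def hi_def algebra_simps)
  finally show ?thesis .
qed

lemma spread_gossip_le:
  assumes "\<And>k. 0 < T k" "\<And>k. T k \<le> 1" "\<And>k. 0 < S k"
    and in_range: "\<And>k. fst (w k) \<in> {..<n} \<times> {..<n}"
  shows "spread n (gossip T S k0 x0 w m) \<le> spread n x0 * (\<Prod>k<m. 1 + 2 * S (k0 + k))"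
proof (induction m)
  case 0
  then show ?case by simp
next
  case (Suc m)
  obtain i j ei ej where w: "w (k0 + m) = ((i, j), (ei, ej))" by (metis prod.exhaust)
  have "i < n" "j < n" using in_range[of "k0 + m"] w by auto
  then have "spread n (gossip T S k0 x0 w (Suc m)) \<le> (1 + 2 * S (k0 + m)) * spread n (gossip T S k0 x0 w m)"
    using w assms by (simp add: spread_gstep_le)
  also have "\<dots> \<le> (1 + 2 * S (k0 + m)) * (spread n x0 * (\<Prod>k<m. 1 + 2 * S (k0 + k)))"
    using Suc.IH assms(3)[of "k0 + m"] by (intro mult_left_mono) auto
  finally show ?case by (simp add: algebra_simps)
qed

lemma prod_lessThan_add:
  fixes g :: "nat \<Rightarrow> 'a::comm_monoid_mult"
  shows "(\<Prod>k<p + m. g k) = (\<Prod>k<p. g k) * (\<Prod>k<m. g (p + k))"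
  by (induction m) (simp_all add: mult.assoc)

lemma prod_shift_le_prod:
  fixes g :: "nat \<Rightarrow> 'a::linordered_semidom"
  assumes "\<And>k. 1 \<le> g k"
  shows "(\<Prod>k<m. g (p + k)) \<le> (\<Prod>k<p + m. g k)"
proof -
  have "1 \<le> (\<Prod>k<p. g k)" "0 \<le> (\<Prod>k<m. g (p + k))"
    using assms by (auto intro: prod_ge_1 prod_nonneg order.trans[OF zero_le_one])
  then show ?thesis
    using mult_right_mono[of 1 "\<Prod>k<p. g k" "\<Prod>k<m. g (p + k)"] by (simp add: prod_lessThan_add)
qed

lemma spread_gossip_le_bound:
  assumes "\<And>k. 0 < T k" "\<And>k. T k \<le> 1" "\<And>k. 0 < S k"
    and "\<And>k. fst (w k) \<in> {..<n} \<times> {..<n}" "0 < n"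
    and B: "\<And>N. (\<Prod>k<N. 1 + 2 * S k) \<le> B"
  shows "spread n (gossip T S k0 x0 w m) \<le> spread n x0 * B"
proof -
  have factor_ge_1: "1 \<le> 1 + 2 * S k" for k using assms(3)[of k] by simp
  have "spread n (gossip T S k0 x0 w m) \<le> spread n x0 * (\<Prod>k<m. 1 + 2 * S (k0 + k))"
    using assms by (intro spread_gossip_le)
  also have "\<dots> \<le> spread n x0 * B"
    using prod_shift_le_prod[OF factor_ge_1] spread_nonneg[OF \<open>0 < n\<close>]
    by (intro mult_left_mono order.trans[OF _ B]) auto
  finally show ?thesis .
qed

lemma incseq_prod_lessThan:
  fixes g :: "nat \<Rightarrow> 'a::linordered_semidom"
  assumes "\<And>k. 1 \<le> g k"
  shows "incseq (\<lambda>N. \<Prod>k<N. g k)"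
proof (rule incseq_SucI)
  fix N
  have "0 \<le> (\<Prod>k<N. g k)"
    using assms by (auto intro: prod_nonneg order.trans[OF zero_le_one])
  then show "(\<Prod>k<N. g k) \<le> (\<Prod>k<Suc N. g k)"
    using mult_left_mono[OF assms[of N]] by simp
qed

lemma incseq_bounded_if_not_at_top:
  fixes f :: "nat \<Rightarrow> 'a::linorder"
  assumes "incseq f" "\<not> filterlim f at_top sequentially"
  obtains B where "\<And>N. f N \<le> B"
proof -
  obtain B where "\<not> eventually (\<lambda>N. B \<le> f N) sequentially"
    using assms(2) by (auto simp: filterlim_at_top)
  then have "f N \<le> B" for N
    using assms(1) by (metis eventually_sequentiallyI incseqD linorder_le_cases order.trans)
  then show thesis by (rule that)
qed

lemma (in prob_space) AE_of_measure_eq_1: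
  assumes "measure M A = 1"
  shows "AE x in M. x \<in> A"
proof -
  have "A \<in> sets M" using assms measure_notin_sets[of A M] by fastforce
  then show ?thesis using assms prob_eq_1 by blast
qed

lemma AE_PiM_set_pmf:
  "AE w in PiM UNIV (\<lambda>_::nat. measure_pmf p). \<forall>k. w k \<in> set_pmf p"
  unfolding AE_all_countable
  by (intro allI AE_PiM_component) (auto simp: measure_pmf.prob_space_axioms AE_measure_pmf)

theorem theorem2:
  fixes n :: nat and a :: "nat \<Rightarrow> nat \<Rightarrow> real"
    and \<alpha> \<beta> \<gamma> :: real
    and T S :: "nat \<Rightarrow> real"
    and sel :: "(nat \<times> nat) pmf" and ev :: "(act \<times> act) pmf"
    and k0 :: nat and x0 :: "nat \<Rightarrow> real"
  assumes n3: "n \<ge> 3"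
    and a_nonneg: "\<And>i j. i < n \<Longrightarrow> j < n \<Longrightarrow> a i j \<ge> 0"
    and a_stoch: "\<And>i. i < n \<Longrightarrow> (\<Sum>j<n. a i j) = 1"
    and sel_def: "\<And>i j. pmf sel (i, j) = (if i < n \<and> j < n then a i j / real n else 0)"
    and abc: "\<alpha> \<ge> 0" "\<beta> \<ge> 0" "\<gamma> \<ge> 0" "\<alpha> + \<beta> + \<gamma> = 1"
    and ev_i: "pmf (map_pmf fst ev) Att = \<alpha>" "pmf (map_pmf fst ev) Neu = \<beta>"
              "pmf (map_pmf fst ev) Rep = \<gamma>"
    and ev_j: "pmf (map_pmf snd ev) Att = \<alpha>" "pmf (map_pmf snd ev) Neu = \<beta>"
              "pmf (map_pmf snd ev) Rep = \<gamma>"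
    and T_pos: "\<And>k. 0 < T k" and T_le1: "\<And>k. T k \<le> 1"
    and S_pos: "\<And>k. 0 < S k"
    and diverge: "\<And>M. M \<ge> 0 \<Longrightarrow>
       measure (PiM UNIV (\<lambda>_::nat. measure_pmf (pair_pmf sel ev)))
         {w \<in> space (PiM UNIV (\<lambda>_::nat. measure_pmf (pair_pmf sel ev))).
            limsup (\<lambda>k. ereal (spread n (gossip T S k0 x0 w (k - k0)))) > ereal M} = 1"
  shows "filterlim (\<lambda>N. \<Prod>k<N. 1 + 2 * S k) at_top sequentially"
proof (rule ccontr)
  let ?\<Omega> = "PiM UNIV (\<lambda>_::nat. measure_pmf (pair_pmf sel ev))"
  have factor_ge_1: "1 \<le> 1 + 2 * S k" for k using S_pos[of k] by simp
  assume "\<not> filterlim (\<lambda>N. \<Prod>k<N. 1 + 2 * S k) at_top sequentially"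
  then obtain B where B: "\<And>N. (\<Prod>k<N. 1 + 2 * S k) \<le> B"
    using incseq_bounded_if_not_at_top incseq_prod_lessThan factor_ge_1 by metis
  define M where "M = spread n x0 * B"
  have "0 \<le> M" using spread_nonneg[of n x0] B[of 0] n3 by (simp add: M_def)
  interpret prob_space ?\<Omega> by (intro prob_space_PiM) (simp add: measure_pmf.prob_space_axioms)
  have sel_range: "ij \<in> {..<n} \<times> {..<n}" if "ij \<in> set_pmf sel" for ij
    using that sel_def[of "fst ij" "snd ij"] by (auto simp: set_pmf_eq mem_Times_iff split: if_splits)
  have "AE w in ?\<Omega>. \<forall>k. fst (w k) \<in> {..<n} \<times> {..<n}"
    using AE_PiM_set_pmf by eventually_elim (metis mem_Times_iff sel_range set_pair_pmf)
  moreover have "AE w in ?\<Omega>. limsup (\<lambda>k. ereal (spread n (gossip T S k0 x0 w (k - k0)))) > ereal M"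
    using AE_of_measure_eq_1[OF diverge[OF \<open>0 \<le> M\<close>]] by eventually_elim simp
  ultimately have "AE w in ?\<Omega>. False"
  proof eventually_elim
    case (elim w)
    have "spread n (gossip T S k0 x0 w m) \<le> M" for m
      unfolding M_def using elim(1) n3 B by (intro spread_gossip_le_bound T_pos T_le1 S_pos) auto
    then have "limsup (\<lambda>k. ereal (spread n (gossip T S k0 x0 w (k - k0)))) \<le> ereal M"
      by (intro Limsup_bounded always_eventually) simp
    then show False using elim(2) by simp
  qed
  then show False by simp
qed

end
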